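(* Let $I_3>0$, $g\in\mathbb{R}$, $a>0$, $b\neq 0$, and let $I_1(t)=a+bt$, considered on the time interval where $a+bt>0$. Consider the time-dependent Hamiltonian (Lagrange top in gravity with linearly time-dependent moment of inertia), in Euler angles $(\phi,\theta,\psi)$, $\theta\in(0,\pi)$, with conjugate momenta $(p_\phi,p_\theta,p_\psi)$: \[ H=\frac{1}{2I_1(t)}\Big(p_\theta^2+\frac{p_\phi^2+p_\psi^2-2p_\phi p_\psi\cos\theta}{\sin^2\theta}\Big)+\frac12\Big(\frac1{I_3}-\frac1{I_1(t)}\Big)p_\psi^2+g\cos\theta . \] Along any solution of Hamilton's equations, $p_\phi,p_\psi$ are constant, and with the new time $\tau=\log\big((a+bt)/a\big)$ (so that $I_1(t)=ae^{\tau}$) the function $y(\tau):=\theta(t)$ satisfies the trigonometric form of the degenerate fifth Painlevé equation \[ \frac{d^2y}{d\tau^2}=-\frac{\partial V}{\partial y},\qquad V(y,\tau)=-\frac{\kappa_\infty^2}{2\sin^2(y/2)}-\frac{\kappa_0^2}{2\cos^2(y/2)}-\frac{\gamma e^{\tau}}{2}\cos y, \] (i.e.\ $\delta=0$) with $\kappa_0^2=-\dfrac{(p_\phi+p_\psi)^2}{4b^2}$, $\kappa_\infty^2=-\dfrac{(p_\phi-p_\psi)^2}{4b^2}$, $\gamma=-\dfrac{2ag}{b^2}$. Conversely, the equation of motion of $\theta$ is equivalent to this equation.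
   Context: Hamilton's equations are $\dot q=\partial H/\partial p$, $\dot p=-\partial H/\partial q$ for each conjugate pair, with $\dot{}=d/dt$. The trigonometric form of $P_V$ with general $\delta$ has potential $V$ with the additional term $-\frac{\delta e^{2\tau}}{4}\cos^2y$; via $w=-\cot^2(y/2)$, $\zeta=e^\tau$ it is equivalent to the fifth Painlevé equation with $\alpha=\kappa_\infty^2/2$, $\beta=-\kappa_0^2/2$; the case $\delta=0$ is the degenerate fifth Painlevé equation. *)

theory Defs
  imports "HOL-Analysis.Analysis"
begin

definition I1 :: "real \<Rightarrow> real \<Rightarrow> real \<Rightarrow> real" where
  "I1 a b t = a + b * t"

definition Ham :: "real \<Rightarrow> real \<Rightarrow> real \<Rightarrow> real \<Rightarrow> real \<Rightarrow>
    real \<Rightarrow> real \<Rightarrow> real \<Rightarrow> real \<Rightarrow> real \<Rightarrow> real \<Rightarrow> real" where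
  "Ham I3 g a b t ph th ps pph pth pps =
     1 / (2 * I1 a b t) * (pth ^ 2 + (pph ^ 2 + pps ^ 2 - 2 * pph * pps * cos th) / (sin th) ^ 2)
     + 1 / 2 * (1 / I3 - 1 / I1 a b t) * pps ^ 2 + g * cos th"

definition hamilton_solution ::
  "real \<Rightarrow> real \<Rightarrow> real \<Rightarrow> real \<Rightarrow> real set \<Rightarrow> (real \<Rightarrow> real) \<Rightarrow> (real \<Rightarrow> real) \<Rightarrow>
   (real \<Rightarrow> real) \<Rightarrow> (real \<Rightarrow> real) \<Rightarrow> (real \<Rightarrow> real) \<Rightarrow> (real \<Rightarrow> real) \<Rightarrow> bool" where
  "hamilton_solution I3 g a b T ph th ps pph pth pps \<longleftrightarrow>
    (\<forall>t\<in>T. th t \<in> {0<..<pi} \<and>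
      (ph has_real_derivative
         deriv (\<lambda>p. Ham I3 g a b t (ph t) (th t) (ps t) p (pth t) (pps t)) (pph t)) (at t) \<and>
      (th has_real_derivative
         deriv (\<lambda>p. Ham I3 g a b t (ph t) (th t) (ps t) (pph t) p (pps t)) (pth t)) (at t) \<and>
      (ps has_real_derivative
         deriv (\<lambda>p. Ham I3 g a b t (ph t) (th t) (ps t) (pph t) (pth t) p) (pps t)) (at t) \<and>
      (pph has_real_derivative
         - deriv (\<lambda>q. Ham I3 g a b t q (th t) (ps t) (pph t) (pth t) (pps t)) (ph t)) (at t) \<and>
      (pth has_real_derivative
         - deriv (\<lambda>q. Ham I3 g a b t (ph t) q (ps t) (pph t) (pth t) (pps t)) (th t)) (at t) \<and>
      (pps has_real_derivative
         - deriv (\<lambda>q. Ham I3 g a b t (ph t) (th t) q (pph t) (pth t) (pps t)) (ps t)) (at t))"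

text \<open>H does not depend on phi, psi, so their
  values (here 0) are irrelevant.\<close>
definition theta_motion ::
  "real \<Rightarrow> real \<Rightarrow> real \<Rightarrow> real \<Rightarrow> real set \<Rightarrow> real \<Rightarrow> real \<Rightarrow>
   (real \<Rightarrow> real) \<Rightarrow> (real \<Rightarrow> real) \<Rightarrow> bool" where
  "theta_motion I3 g a b T cph cps th pth \<longleftrightarrow>
    (\<forall>t\<in>T.
      (th has_real_derivative
         deriv (\<lambda>p. Ham I3 g a b t 0 (th t) 0 cph p cps) (pth t)) (at t) \<and>
      (pth has_real_derivative
         - deriv (\<lambda>q. Ham I3 g a b t 0 q 0 cph (pth t) cps) (th t)) (at t))"

definition new_time :: "real \<Rightarrow> real \<Rightarrow> real \<Rightarrow> real" where
  "new_time a b t = ln ((a + b * t) / a)"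

definition old_time :: "real \<Rightarrow> real \<Rightarrow> real \<Rightarrow> real" where
  "old_time a b \<tau> = a * (exp \<tau> - 1) / b"

text \<open>Potential of the trigonometric degenerate P_V (delta = 0); k0sq, kinfsq stand for
  kappa_0^2, kappa_infinity^2 (arbitrary real numbers, possibly negative).\<close>
definition V_PV :: "real \<Rightarrow> real \<Rightarrow> real \<Rightarrow> real \<Rightarrow> real \<Rightarrow> real" where
  "V_PV k0sq kinfsq gam y \<tau> =
     - kinfsq / (2 * (sin (y / 2)) ^ 2) - k0sq / (2 * (cos (y / 2)) ^ 2) - gam * exp \<tau> / 2 * cos y"

definition solves_PV :: "real \<Rightarrow> real \<Rightarrow> real \<Rightarrow> real set \<Rightarrow> (real \<Rightarrow> real) \<Rightarrow> bool" where
  "solves_PV k0sq kinfsq gam S y \<longleftrightarrow>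
    (\<exists>y'. \<forall>\<tau>\<in>S. (y has_real_derivative y' \<tau>) (at \<tau>) \<and>
       (y' has_real_derivative - deriv (\<lambda>u. V_PV k0sq kinfsq gam u \<tau>) (y \<tau>)) (at \<tau>))"

end

(* Since H does not depend on phi and psi, the momenta p_phi and p_psi are constant, and only
   the equations for (theta, p_theta) remain. The half-angle identity
     (p^2 + q^2 - 2 p q cos theta) / sin^2 theta = (p - q)^2 / (4 sin^2 (theta/2)) + (p + q)^2 / (4 cos^2 (theta/2))
   turns the centrifugal term of H into the kappa terms of V, and b^2 gamma e^tau = -2 g I1(t) matches
   the gravity terms, so that dH/dtheta = (b^2 / I1(t)) dV/dy at tau(t). Together with
   dH/dp_theta = p_theta / I1(t) and dtau/dt = b / I1(t), Hamilton's equations for (theta, p_theta)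
   become y' = p_theta / b, (p_theta / b)' = -dV/dy. As t |-> tau is a diffeomorphism of
   {t. a + b t > 0} onto the real line, the correspondence works in both directions. *)

theory Submission
  imports Defs
begin

definition centrifugal :: "real \<Rightarrow> real \<Rightarrow> real \<Rightarrow> real" where
  "centrifugal p q \<theta> = (p\<^sup>2 + q\<^sup>2 - 2 * p * q * cos \<theta>) / (sin \<theta>)\<^sup>2"

lemma centrifugal_half_angle:
  assumes "sin \<theta> \<noteq> 0"
  shows "centrifugal p q \<theta> = (p - q)\<^sup>2 / (4 * (sin (\<theta> / 2))\<^sup>2) + (p + q)\<^sup>2 / (4 * (cos (\<theta> / 2))\<^sup>2)"
proof -
  define h where "h = \<theta> / 2"
  have \<theta>: "\<theta> = 2 * h" by (simp add: h_def)
  have "sin h \<noteq> 0" "cos h \<noteq> 0" using assms by (auto simp: \<theta> sin_double)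
  moreover have pythagoras: "(sin h)\<^sup>2 + (cos h)\<^sup>2 = 1" by simp
  ultimately show ?thesis
    unfolding centrifugal_def \<theta> sin_double cos_double h_def[symmetric]
    by (simp add: field_simps) (use pythagoras in algebra)
qed

lemma V_PV_centrifugal:
  assumes "sin y \<noteq> 0" and "b \<noteq> 0"
  shows "V_PV (- ((p + q)\<^sup>2) / (4 * b\<^sup>2)) (- ((p - q)\<^sup>2) / (4 * b\<^sup>2)) \<gamma> y \<tau>
    = centrifugal p q y / (2 * b\<^sup>2) - \<gamma> * exp \<tau> / 2 * cos y"
  using assms unfolding V_PV_def centrifugal_half_angle[OF assms(1)]
  by (simp add: field_simps)

lemma centrifugal_differentiable:
  assumes "sin \<theta> \<noteq> 0"
  shows "centrifugal p q differentiable at \<theta>"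
  unfolding real_differentiable_def centrifugal_def[abs_def] using assms
  by (intro exI) (rule derivative_eq_intros refl | simp)+

lemma has_real_derivative_V_PV:
  assumes "sin y \<noteq> 0" and "b \<noteq> 0"
  shows "((\<lambda>u. V_PV (- ((p + q)\<^sup>2) / (4 * b\<^sup>2)) (- ((p - q)\<^sup>2) / (4 * b\<^sup>2)) \<gamma> u \<tau>)
    has_real_derivative deriv (centrifugal p q) y / (2 * b\<^sup>2) + \<gamma> * exp \<tau> / 2 * sin y) (at y)"
proof (rule has_field_derivative_transform_within_open)
  show "((\<lambda>u. centrifugal p q u / (2 * b\<^sup>2) - \<gamma> * exp \<tau> / 2 * cos u)
    has_real_derivative deriv (centrifugal p q) y / (2 * b\<^sup>2) + \<gamma> * exp \<tau> / 2 * sin y) (at y)"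
    using centrifugal_differentiable[OF assms(1)] assms(2)
    by (auto intro!: derivative_eq_intros simp: field_simps power2_eq_square
        simp flip: DERIV_deriv_iff_real_differentiable)
  show "open {u::real. sin u \<noteq> 0}"
    by (intro open_Collect_neq continuous_intros)
qed (use assms V_PV_centrifugal in auto)

lemma deriv_Ham_angle:
  assumes "sin \<theta> \<noteq> 0" and "I1 a b t \<noteq> 0"
  shows "deriv (\<lambda>q. Ham I3 g a b t ph q ps pph pth pps) \<theta>
    = deriv (centrifugal pph pps) \<theta> / (2 * I1 a b t) - g * sin \<theta>"
proof (rule DERIV_imp_deriv)
  have "(\<lambda>q. Ham I3 g a b t ph q ps pph pth pps) = (\<lambda>q. 1 / (2 * I1 a b t) * (pth\<^sup>2 + centrifugal pph pps q)
    + 1 / 2 * (1 / I3 - 1 / I1 a b t) * pps\<^sup>2 + g * cos q)"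
    by (simp add: fun_eq_iff Ham_def centrifugal_def)
  then show "((\<lambda>q. Ham I3 g a b t ph q ps pph pth pps) has_real_derivative
      deriv (centrifugal pph pps) \<theta> / (2 * I1 a b t) - g * sin \<theta>) (at \<theta>)"
    using centrifugal_differentiable[OF assms(1)] assms(2)
    by (auto intro!: derivative_eq_intros simp flip: DERIV_deriv_iff_real_differentiable)
qed

lemma deriv_Ham_momentum:
  assumes "I1 a b t \<noteq> 0"
  shows "deriv (\<lambda>p. Ham I3 g a b t ph \<theta> ps pph p pps) x = x / I1 a b t"
  unfolding Ham_def using assms
  by (intro DERIV_imp_deriv) (rule derivative_eq_intros refl | simp)+

lemma exp_new_time:
  assumes "a > 0" and "a + b * t > 0"
  shows "a * exp (new_time a b t) = I1 a b t"
  using assms by (simp add: new_time_def I1_def)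

lemma old_time_new_time:
  assumes "a > 0" and "b \<noteq> 0" and "a + b * t > 0"
  shows "old_time a b (new_time a b t) = t"
  using assms by (simp add: old_time_def new_time_def field_simps)

lemma new_time_old_time:
  assumes "a > 0" and "b \<noteq> 0"
  shows "new_time a b (old_time a b \<tau>) = \<tau>"
  using assms by (simp add: old_time_def new_time_def field_simps)

lemma has_real_derivative_new_time:
  assumes "a > 0" and "a + b * t > 0"
  shows "(new_time a b has_real_derivative b / I1 a b t) (at t)"
  unfolding new_time_def[abs_def] I1_def using assms
  by (auto intro!: derivative_eq_intros simp: field_simps)

lemma has_real_derivative_old_time:
  assumes "b \<noteq> 0"
  shows "(old_time a b has_real_derivative a * exp \<tau> / b) (at \<tau>)"
  unfolding old_time_def[abs_def] using assms by (auto intro!: derivative_eq_intros)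

lemma has_real_derivative_old_time_iff:
  assumes "a > 0" and "b \<noteq> 0" and "a + b * t > 0"
  shows "(f has_real_derivative D) (at t) \<longleftrightarrow>
    ((\<lambda>\<tau>. f (old_time a b \<tau>)) has_real_derivative D * I1 a b t / b) (at (new_time a b t))"
proof
  assume "(f has_real_derivative D) (at t)"
  then have "(f has_real_derivative D) (at (old_time a b (new_time a b t)))"
    using assms by (simp add: old_time_new_time)
  from DERIV_chain2[OF this has_real_derivative_old_time[OF assms(2)]]
  show "((\<lambda>\<tau>. f (old_time a b \<tau>)) has_real_derivative D * I1 a b t / b) (at (new_time a b t))"
    using assms by (simp add: exp_new_time)
next
  have I1_pos: "I1 a b t > 0" using assms by (simp add: I1_def)
  assume "((\<lambda>\<tau>. f (old_time a b \<tau>)) has_real_derivative D * I1 a b t / b) (at (new_time a b t))"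
  from DERIV_chain2[OF this has_real_derivative_new_time[OF assms(1,3)]]
  have "((\<lambda>s. f (old_time a b (new_time a b s))) has_real_derivative D) (at t)"
    using I1_pos assms(2) by (simp add: field_simps)
  then show "(f has_real_derivative D) (at t)"
    by (rule has_field_derivative_transform_within_open[where S = "{s. a + b * s > 0}"])
      (use assms old_time_new_time in \<open>auto intro!: open_Collect_less continuous_intros\<close>)
qed

lemma deriv_Ham_angle_eq_deriv_V_PV:
  assumes "a > 0" and "b \<noteq> 0" and "a + b * t > 0" and "sin \<theta> \<noteq> 0"
  shows "deriv (\<lambda>q. Ham I3 g a b t ph q ps pph pth pps) \<theta> = b\<^sup>2 / I1 a b t *
    deriv (\<lambda>u. V_PV (- ((pph + pps)\<^sup>2) / (4 * b\<^sup>2)) (- ((pph - pps)\<^sup>2) / (4 * b\<^sup>2))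
      (- 2 * a * g / b\<^sup>2) u (new_time a b t)) \<theta>"
proof -
  have I1_pos: "I1 a b t > 0" using assms(3) by (simp add: I1_def)
  have "exp (new_time a b t) = I1 a b t / a"
    using exp_new_time[OF assms(1,3)] assms(1) by (simp add: field_simps)
  then show ?thesis
    unfolding deriv_Ham_angle[OF assms(4) I1_pos[THEN less_imp_neq, symmetric]]
      DERIV_imp_deriv[OF has_real_derivative_V_PV[OF assms(4,2)]]
    using I1_pos assms(1,2) by (simp add: field_simps power2_eq_square)
qed

lemma has_real_derivative_divide_const_iff:
  assumes "c \<noteq> 0"
  shows "((\<lambda>x. f x / c) has_real_derivative D / c) (at x within S) \<longleftrightarrow>
    (f has_real_derivative D) (at x within S)"
proof
  assume "((\<lambda>x. f x / c) has_real_derivative D / c) (at x within S)"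
  from DERIV_cmult[OF this, of c] show "(f has_real_derivative D) (at x within S)"
    using assms by simp
qed (rule DERIV_cdivide)

lemma theta_equations_iff_PV_equations:
  fixes \<theta> p\<theta> :: "real \<Rightarrow> real"
  assumes "a > 0" and "b \<noteq> 0" and "a + b * t > 0" and "sin (\<theta> t) \<noteq> 0"
  shows "(\<theta> has_real_derivative deriv (\<lambda>p. Ham I3 g a b t 0 (\<theta> t) 0 cph p cps) (p\<theta> t)) (at t) \<and>
      (p\<theta> has_real_derivative - deriv (\<lambda>q. Ham I3 g a b t 0 q 0 cph (p\<theta> t) cps) (\<theta> t)) (at t)
    \<longleftrightarrow>
    ((\<lambda>\<tau>. \<theta> (old_time a b \<tau>)) has_real_derivative p\<theta> t / b) (at (new_time a b t)) \<and>
      ((\<lambda>\<tau>. p\<theta> (old_time a b \<tau>) / b) has_real_derivative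
        - deriv (\<lambda>u. V_PV (- ((cph + cps)\<^sup>2) / (4 * b\<^sup>2)) (- ((cph - cps)\<^sup>2) / (4 * b\<^sup>2))
          (- 2 * a * g / b\<^sup>2) u (new_time a b t)) (\<theta> t)) (at (new_time a b t))"
    (is "?\<theta>_eq \<and> ?p\<theta>_eq \<longleftrightarrow> ?y_eq \<and> ?y'_eq")
proof -
  note time_change = has_real_derivative_old_time_iff[OF assms(1-3)]
  have I1_nonzero: "I1 a b t \<noteq> 0" using assms(3) by (simp add: I1_def)
  have "?\<theta>_eq \<longleftrightarrow> (\<theta> has_real_derivative p\<theta> t / I1 a b t) (at t)"
    by (simp add: deriv_Ham_momentum[OF I1_nonzero])
  also have "\<dots> \<longleftrightarrow> ?y_eq"
    using I1_nonzero by (simp add: time_change)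
  finally have \<theta>_iff: "?\<theta>_eq \<longleftrightarrow> ?y_eq" .
  let ?V' = "deriv (\<lambda>u. V_PV (- ((cph + cps)\<^sup>2) / (4 * b\<^sup>2)) (- ((cph - cps)\<^sup>2) / (4 * b\<^sup>2))
    (- 2 * a * g / b\<^sup>2) u (new_time a b t)) (\<theta> t)"
  have "?p\<theta>_eq \<longleftrightarrow> (p\<theta> has_real_derivative - (b\<^sup>2 / I1 a b t * ?V')) (at t)"
    by (simp only: deriv_Ham_angle_eq_deriv_V_PV[OF assms])
  also have "\<dots> \<longleftrightarrow> ((\<lambda>\<tau>. p\<theta> (old_time a b \<tau>)) has_real_derivative - (b * ?V')) (at (new_time a b t))"
    using I1_nonzero by (simp add: time_change power2_eq_square)
  also have "\<dots> \<longleftrightarrow> ?y'_eq"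
    using has_real_derivative_divide_const_iff[OF assms(2), of "\<lambda>\<tau>. p\<theta> (old_time a b \<tau>)" "- (b * ?V')"]
      assms(2) by simp
  finally have p\<theta>_iff: "?p\<theta>_eq \<longleftrightarrow> ?y'_eq" .
  show ?thesis using \<theta>_iff p\<theta>_iff by blast
qed

lemma theta_motion_imp_solves_PV:
  assumes "a > 0" and "b \<noteq> 0" and "T \<subseteq> {t. a + b * t > 0}" and "\<forall>t\<in>T. sin (\<theta> t) \<noteq> 0"
    and motion: "theta_motion I3 g a b T cph cps \<theta> p\<theta>"
  shows "solves_PV (- ((cph + cps)\<^sup>2) / (4 * b\<^sup>2)) (- ((cph - cps)\<^sup>2) / (4 * b\<^sup>2)) (- 2 * a * g / b\<^sup>2)
    (new_time a b ` T) (\<lambda>\<tau>. \<theta> (old_time a b \<tau>))"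
  unfolding solves_PV_def
proof (intro exI[of _ "\<lambda>\<tau>. p\<theta> (old_time a b \<tau>) / b"] ballI)
  fix \<tau> assume "\<tau> \<in> new_time a b ` T"
  then obtain t where t: "t \<in> T" and \<tau>: "\<tau> = new_time a b t" ..
  have pos: "a + b * t > 0" using t assms(3) by auto
  have "old_time a b \<tau> = t" using \<tau> assms(1,2) pos by (simp add: old_time_new_time)
  moreover have "(\<theta> has_real_derivative deriv (\<lambda>p. Ham I3 g a b t 0 (\<theta> t) 0 cph p cps) (p\<theta> t)) (at t) \<and>
    (p\<theta> has_real_derivative - deriv (\<lambda>q. Ham I3 g a b t 0 q 0 cph (p\<theta> t) cps) (\<theta> t)) (at t)"
    using motion t unfolding theta_motion_def by blast
  moreover have "sin (\<theta> t) \<noteq> 0" using t assms(4) by blast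
  ultimately show "((\<lambda>\<tau>. \<theta> (old_time a b \<tau>)) has_real_derivative p\<theta> (old_time a b \<tau>) / b) (at \<tau>) \<and>
    ((\<lambda>\<tau>. p\<theta> (old_time a b \<tau>) / b) has_real_derivative
      - deriv (\<lambda>u. V_PV (- ((cph + cps)\<^sup>2) / (4 * b\<^sup>2)) (- ((cph - cps)\<^sup>2) / (4 * b\<^sup>2))
        (- 2 * a * g / b\<^sup>2) u \<tau>) (\<theta> (old_time a b \<tau>))) (at \<tau>)"
    using theta_equations_iff_PV_equations[where \<theta> = \<theta>, OF assms(1,2) pos] \<tau> by simp
qed

lemma solves_PV_imp_theta_motion:
  assumes "a > 0" and "b \<noteq> 0" and "T \<subseteq> {t. a + b * t > 0}" and "\<forall>t\<in>T. sin (\<theta> t) \<noteq> 0"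
    and "solves_PV (- ((cph + cps)\<^sup>2) / (4 * b\<^sup>2)) (- ((cph - cps)\<^sup>2) / (4 * b\<^sup>2)) (- 2 * a * g / b\<^sup>2)
      (new_time a b ` T) (\<lambda>\<tau>. \<theta> (old_time a b \<tau>))"
  shows "\<exists>p\<theta>. theta_motion I3 g a b T cph cps \<theta> p\<theta>"
proof -
  obtain y' where PV: "\<forall>\<tau>\<in>new_time a b ` T.
      ((\<lambda>\<tau>. \<theta> (old_time a b \<tau>)) has_real_derivative y' \<tau>) (at \<tau>) \<and>
      (y' has_real_derivative - deriv (\<lambda>u. V_PV (- ((cph + cps)\<^sup>2) / (4 * b\<^sup>2))
        (- ((cph - cps)\<^sup>2) / (4 * b\<^sup>2)) (- 2 * a * g / b\<^sup>2) u \<tau>) (\<theta> (old_time a b \<tau>))) (at \<tau>)"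
    using assms(5) unfolding solves_PV_def by blast
  have y'_recovered: "(\<lambda>\<tau>. b * y' (new_time a b (old_time a b \<tau>)) / b) = y'"
    using assms(1,2) by (simp add: new_time_old_time)
  show ?thesis
    unfolding theta_motion_def
  proof (intro exI[of _ "\<lambda>t. b * y' (new_time a b t)"] ballI)
    fix t assume t: "t \<in> T"
    have pos: "a + b * t > 0" using t assms(3) by auto
    have "old_time a b (new_time a b t) = t" using assms(1,2) pos by (rule old_time_new_time)
    moreover have "new_time a b t \<in> new_time a b ` T" using t by simp
    moreover have "sin (\<theta> t) \<noteq> 0" using t assms(4) by blast
    ultimately show "(\<theta> has_real_derivative deriv (\<lambda>p. Ham I3 g a b t 0 (\<theta> t) 0 cph p cps)
        (b * y' (new_time a b t))) (at t) \<and>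
      ((\<lambda>t. b * y' (new_time a b t)) has_real_derivative
        - deriv (\<lambda>q. Ham I3 g a b t 0 q 0 cph (b * y' (new_time a b t)) cps) (\<theta> t)) (at t)"
      using theta_equations_iff_PV_equations[where \<theta> = \<theta> and p\<theta> = "\<lambda>t. b * y' (new_time a b t)",
          OF assms(1,2) pos] PV y'_recovered by auto
  qed
qed

lemma theta_motion_iff_solves_PV:
  assumes "a > 0" and "b \<noteq> 0" and "T \<subseteq> {t. a + b * t > 0}" and "\<forall>t\<in>T. \<theta> t \<in> {0<..<pi}"
  shows "(\<exists>p\<theta>. theta_motion I3 g a b T cph cps \<theta> p\<theta>) \<longleftrightarrow>
    solves_PV (- ((cph + cps)\<^sup>2) / (4 * b\<^sup>2)) (- ((cph - cps)\<^sup>2) / (4 * b\<^sup>2)) (- 2 * a * g / b\<^sup>2)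
      (new_time a b ` T) (\<lambda>\<tau>. \<theta> (old_time a b \<tau>))"
proof -
  have "\<forall>t\<in>T. sin (\<theta> t) \<noteq> 0"
    using assms(4) sin_gt_zero by fastforce
  then show ?thesis
    using theta_motion_imp_solves_PV[OF assms(1-3)] solves_PV_imp_theta_motion[OF assms(1-3)] by blast
qed

lemma hamilton_solution_momenta_constant:
  assumes "is_interval T" and "hamilton_solution I3 g a b T ph \<theta> ps pph p\<theta> pps"
  shows "\<exists>cph cps. \<forall>t\<in>T. pph t = cph \<and> pps t = cps"
proof -
  have "convex T" using assms(1) by (simp add: is_interval_convex_1)
  moreover have "(pph has_real_derivative 0) (at t within T)" "(pps has_real_derivative 0) (at t within T)"
    if "t \<in> T" for t
    using assms(2) that unfolding hamilton_solution_def
    by (auto simp: Ham_def intro: has_field_derivative_at_within)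
  ultimately obtain cph cps where "\<forall>t\<in>T. pph t = cph" "\<forall>t\<in>T. pps t = cps"
    using has_field_derivative_zero_constant by metis
  then show ?thesis by blast
qed

lemma hamilton_solution_imp_theta_motion:
  assumes "hamilton_solution I3 g a b T ph \<theta> ps pph p\<theta> pps" and "\<forall>t\<in>T. pph t = cph \<and> pps t = cps"
  shows "theta_motion I3 g a b T cph cps \<theta> p\<theta>"
  using assms unfolding hamilton_solution_def theta_motion_def
  by (simp add: Ham_def)

theorem theorem2:
  fixes I3 g a b :: real and T :: "real set"
  assumes "I3 > 0" and "a > 0" and "b \<noteq> 0"
    and "open T" and "is_interval T" and "T \<subseteq> {t. a + b * t > 0}"
  shows
    "(\<forall>ph th ps pph pth pps. hamilton_solution I3 g a b T ph th ps pph pth pps \<longrightarrow>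
        (\<exists>cph cps. (\<forall>t\<in>T. pph t = cph \<and> pps t = cps) \<and>
           solves_PV (- ((cph + cps) ^ 2) / (4 * b ^ 2)) (- ((cph - cps) ^ 2) / (4 * b ^ 2))
                     (- 2 * a * g / b ^ 2) (new_time a b ` T) (\<lambda>\<tau>. th (old_time a b \<tau>))))
     \<and> (\<forall>cph cps th. (\<forall>t\<in>T. th t \<in> {0<..<pi}) \<longrightarrow>
        ((\<exists>pth. theta_motion I3 g a b T cph cps th pth) \<longleftrightarrow>
         solves_PV (- ((cph + cps) ^ 2) / (4 * b ^ 2)) (- ((cph - cps) ^ 2) / (4 * b ^ 2))
                   (- 2 * a * g / b ^ 2) (new_time a b ` T) (\<lambda>\<tau>. th (old_time a b \<tau>))))"
proof (intro conjI allI impI)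
  fix ph th ps pph pth pps
  assume hamilton: "hamilton_solution I3 g a b T ph th ps pph pth pps"
  then obtain cph cps where momenta: "\<forall>t\<in>T. pph t = cph \<and> pps t = cps"
    using hamilton_solution_momenta_constant[OF assms(5)] by blast
  have "\<forall>t\<in>T. th t \<in> {0<..<pi}"
    using hamilton unfolding hamilton_solution_def by blast
  moreover have "theta_motion I3 g a b T cph cps th pth"
    using hamilton momenta by (rule hamilton_solution_imp_theta_motion)
  ultimately show "\<exists>cph cps. (\<forall>t\<in>T. pph t = cph \<and> pps t = cps) \<and>
      solves_PV (- ((cph + cps) ^ 2) / (4 * b ^ 2)) (- ((cph - cps) ^ 2) / (4 * b ^ 2))
        (- 2 * a * g / b ^ 2) (new_time a b ` T) (\<lambda>\<tau>. th (old_time a b \<tau>))"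
    using momenta theta_motion_iff_solves_PV[OF assms(2,3,6)] by blast
next
  fix cph cps th
  assume "\<forall>t\<in>T. th t \<in> {0<..<pi}"
  then show "(\<exists>pth. theta_motion I3 g a b T cph cps th pth) \<longleftrightarrow>
      solves_PV (- ((cph + cps) ^ 2) / (4 * b ^ 2)) (- ((cph - cps) ^ 2) / (4 * b ^ 2))
        (- 2 * a * g / b ^ 2) (new_time a b ` T) (\<lambda>\<tau>. th (old_time a b \<tau>))"
    by (intro theta_motion_iff_solves_PV[OF assms(2,3,6)])
qed

end
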